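(* Consider the closed-loop system $\dot p_i=\mathrm{sat}(v_i^{\mathrm{ms}}(\mathbf p)+v_i^{\mathrm{cv}}(\mathbf p))$, $i=1,\dots,n$, defined in the context (with true masses $P_k(\mathbf p)$). Then for any initial state $\mathbf p(t_0)\in\mathbb{R}^{dn}$, the trajectory $\mathbf p(t)$ is bounded for all $t\ge t_0$.
   Context: Setting: $n\ge2$ robots in $\mathbb{R}^d$, positions $p_i\in\mathbb{R}^d$, configuration $\mathbf p=[p_1^\top,\dots,p_n^\top]^\top\in\mathbb{R}^{dn}$; fixed sample points $q_1,\dots,q_m\in\mathbb{R}^d$; constants $\beta>0$, $\sigma_1>0$, $\sigma_2>0$, $\varepsilon\in(0,1)$, $r_{\mathrm{avoid}}>0$, $v_{\max}>0$. Mass: $P_k(\mathbf p)=\frac1n\sum_{i=1}^n e^{-\beta\|q_k-p_i\|^2}$. Meanshift command: $v_i^{\mathrm{ms}}(\mathbf p)=\dfrac{\frac{\sigma_1}{m}\sum_{k=1}^m P_k(\mathbf p)^{-1}e^{-\beta\|q_k-p_i\|^2}(q_k-p_i)}{\sum_{k=1}^m P_k(\mathbf p)^{-1}e^{-\beta\|q_k-p_i\|^2}}$. Repulsive term: $\tilde v_i^{\mathrm{cv}}=\sigma_2\sum_{j\ne i,\ \|p_i-p_j\|\le r_{\mathrm{avoid}}}\frac{r_{\mathrm{avoid}}-\|p_i-p_j\|}{\|p_i-p_j\|+\varepsilon}(p_i-p_j)$. With $\varphi=\min\{\|v_i^{\mathrm{ms}}\|^2/\varepsilon,1\}$, the gain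 is $\kappa_2=\varphi$ if $(v_i^{\mathrm{ms}})^\top\tilde v_i^{\mathrm{cv}}\ge0$ and $\kappa_2=\varphi\min\{-(1-\varepsilon)\|v_i^{\mathrm{ms}}\|^2/((v_i^{\mathrm{ms}})^\top\tilde v_i^{\mathrm{cv}}),1\}$ if $(v_i^{\mathrm{ms}})^\top\tilde v_i^{\mathrm{cv}}<0$; collision-avoidance command $v_i^{\mathrm{cv}}=\kappa_2\tilde v_i^{\mathrm{cv}}$. Saturation: $\mathrm{sat}(z)=v_{\max}z/\|z\|$ if $\|z\|>v_{\max}$, and $\mathrm{sat}(z)=z$ otherwise. *)

theory Defs
  imports "HOL-Analysis.Analysis"
begin

text \<open>Robots are indexed by 0..n-1, sample points by 0..m-1; a configuration is a
map from robot index to a position in the Euclidean space 'a (= R^d).\<close>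

definition mass :: "real \<Rightarrow> nat \<Rightarrow> (nat \<Rightarrow> 'a::euclidean_space) \<Rightarrow> (nat \<Rightarrow> 'a) \<Rightarrow> nat \<Rightarrow> real" where
  "mass \<beta> n q p k = (1 / real n) * (\<Sum>i<n. exp (- \<beta> * (norm (q k - p i))\<^sup>2))"

definition v_ms :: "real \<Rightarrow> real \<Rightarrow> nat \<Rightarrow> nat \<Rightarrow> (nat \<Rightarrow> 'a::euclidean_space) \<Rightarrow> (nat \<Rightarrow> 'a) \<Rightarrow> nat \<Rightarrow> 'a" where
  "v_ms \<beta> \<sigma>1 n m q p i =
     (1 / (\<Sum>k<m. inverse (mass \<beta> n q p k) * exp (- \<beta> * (norm (q k - p i))\<^sup>2))) *\<^sub>R
     ((\<sigma>1 / real m) *\<^sub>R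
       (\<Sum>k<m. (inverse (mass \<beta> n q p k) * exp (- \<beta> * (norm (q k - p i))\<^sup>2)) *\<^sub>R (q k - p i)))"

definition v_cv_tilde :: "real \<Rightarrow> real \<Rightarrow> real \<Rightarrow> nat \<Rightarrow> (nat \<Rightarrow> 'a::euclidean_space) \<Rightarrow> nat \<Rightarrow> 'a" where
  "v_cv_tilde \<sigma>2 \<epsilon> r n p i =
     \<sigma>2 *\<^sub>R (\<Sum>j\<in>{j. j < n \<and> j \<noteq> i \<and> norm (p i - p j) \<le> r}.
               ((r - norm (p i - p j)) / (norm (p i - p j) + \<epsilon>)) *\<^sub>R (p i - p j))"

definition kappa2 :: "real \<Rightarrow> 'a::euclidean_space \<Rightarrow> 'a \<Rightarrow> real" where
  "kappa2 \<epsilon> v vt =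
     (let \<phi> = min ((norm v)\<^sup>2 / \<epsilon>) 1 in
      if inner v vt \<ge> 0 then \<phi>
      else \<phi> * min (- (1 - \<epsilon>) * (norm v)\<^sup>2 / inner v vt) 1)"

definition sat :: "real \<Rightarrow> 'a::real_normed_vector \<Rightarrow> 'a" where
  "sat vmax z = (if norm z > vmax then (vmax / norm z) *\<^sub>R z else z)"

definition closed_loop :: "real \<Rightarrow> real \<Rightarrow> real \<Rightarrow> real \<Rightarrow> real \<Rightarrow> real \<Rightarrow> nat \<Rightarrow> nat
    \<Rightarrow> (nat \<Rightarrow> 'a::euclidean_space) \<Rightarrow> (nat \<Rightarrow> 'a) \<Rightarrow> nat \<Rightarrow> 'a" where
  "closed_loop \<beta> \<sigma>1 \<sigma>2 \<epsilon> r vmax n m q p i =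
     (let vm = v_ms \<beta> \<sigma>1 n m q p i; vt = v_cv_tilde \<sigma>2 \<epsilon> r n p i
      in sat vmax (vm + kappa2 \<epsilon> vm vt *\<^sub>R vt))"

end

theory Submission
  imports Defs
begin

(* Let R bound the sample points. The meanshift command is sigma1/m times a convex combination
   of the vectors q_k - p_i, so its radial component p_i . v_ms is at most
   (sigma1/m) |p_i| (R - |p_i|); the repulsive term has norm at most sigma2 n r and enters with a
   gain in [0,1]; saturation only rescales by a positive factor. Hence outside the ball of radius
   R + m sigma2 n r / sigma1 every robot moves strictly inward, d/dt |p_i|^2 < 0, so |p_i(t)|
   never exceeds the larger of |p_i(t0)| and that radius. *)
lemma has_real_derivative_norm_squared:
  fixes y :: "real \<Rightarrow> 'a::real_inner"
  assumes "(y has_vector_derivative y') (at t within S)"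
  shows "((\<lambda>s. (norm (y s))\<^sup>2) has_real_derivative 2 * inner (y t) y') (at t within S)"
proof -
  have "((\<lambda>s. inner (y s) (y s)) has_derivative
      (\<lambda>h. inner (y t) (h *\<^sub>R y') + inner (h *\<^sub>R y') (y t))) (at t within S)"
    using assms unfolding has_vector_derivative_def by (intro has_derivative_inner)
  then show ?thesis
    unfolding has_field_derivative_def power2_norm_eq_inner
    by (rule has_derivative_eq_rhs) (simp add: fun_eq_iff inner_commute)
qed

lemma inward_trajectory_norm_le_max:
  fixes y :: "real \<Rightarrow> 'a::real_inner"
  assumes der: "\<And>t. t \<ge> t0 \<Longrightarrow> (y has_vector_derivative D t) (at t within {t0..})"
    and inward: "\<And>t. t \<ge> t0 \<Longrightarrow> norm (y t) > R \<Longrightarrow> inner (y t) (D t) < 0"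
    and "t1 \<ge> t0"
  shows "norm (y t1) \<le> max (norm (y t0)) R"
proof (rule ccontr)
  define M where "M = max (norm (y t0)) R"
  assume "\<not> ?thesis"
  then have escaped: "norm (y t1) > M"
    unfolding M_def by linarith
  have "continuous_on {t0..} y"
    using der by (metis atLeast_iff continuous_on_eq_continuous_within has_vector_derivative_continuous)
  then have "continuous_on {t0..t1} (\<lambda>t. norm (y t))"
    by (auto intro: continuous_on_norm continuous_on_subset)
  (* The last time s before t1 with norm (y s) \<le> M; on (s, t1] the field points inward,
     so the mean value theorem makes (norm y)^2 decrease from s to t1. *)
  define K where "K = {t0..t1} \<inter> (\<lambda>t. norm (y t)) -` {..M}"
  have "compact K"
    unfolding K_def compact_eq_bounded_closed
    by (auto intro: continuous_closed_preimage \<open>continuous_on {t0..t1} _\<close>)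
  moreover have "t0 \<in> K"
    using \<open>t1 \<ge> t0\<close> by (simp add: K_def M_def)
  ultimately have "\<exists>s\<in>K. \<forall>t\<in>K. t \<le> s"
    by (intro compact_attains_sup) auto
  then obtain s where "s \<in> K" and last: "\<And>t. t \<in> K \<Longrightarrow> t \<le> s"
    by blast
  then have s: "t0 \<le> s" "s \<le> t1" "norm (y s) \<le> M"
    by (auto simp: K_def)
  with escaped have "s < t1"
    by (cases "s = t1") auto
  have outside: "norm (y t) > R" if "s < t" "t \<le> t1" for t
  proof -
    have "t \<notin> K"
      using last[of t] that by linarith
    then show ?thesis
      using that s by (auto simp: K_def M_def)
  qed
  obtain \<xi> where \<xi>: "s < \<xi>" "\<xi> < t1"
    and "(norm (y t1))\<^sup>2 - (norm (y s))\<^sup>2 = 2 * inner (y \<xi>) (D \<xi>) * (t1 - s)"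
  proof -
    have "((\<lambda>t. (norm (y t))\<^sup>2) has_real_derivative 2 * inner (y t) (D t)) (at t within {s..t1})"
      if "s \<le> t" "t \<le> t1" for t
      by (rule DERIV_subset[OF has_real_derivative_norm_squared[OF der]]) (use that s in auto)
    from mvt_simple[OF \<open>s < t1\<close> this[unfolded has_field_derivative_def]] that
    show ?thesis by auto
  qed
  moreover have "2 * inner (y \<xi>) (D \<xi>) * (t1 - s) < 0"
    using inward[of \<xi>] outside \<xi> s \<open>s < t1\<close> by (simp add: mult_neg_pos)
  ultimately have "(norm (y t1))\<^sup>2 < (norm (y s))\<^sup>2"
    by linarith
  then have "norm (y t1) < norm (y s)"
    by (rule power_less_imp_less_base) simp
  with s escaped show False
    by simp
qed

lemma inner_sum_scaleR_diff_le:
  fixes p :: "'a::real_inner"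
  assumes "\<And>k. k \<in> A \<Longrightarrow> a k \<ge> 0" and "\<And>k. k \<in> A \<Longrightarrow> norm (q k) \<le> R"
  shows "inner p (\<Sum>k\<in>A. a k *\<^sub>R (q k - p)) \<le> (\<Sum>k\<in>A. a k) * (norm p * (R - norm p))"
proof -
  have "inner p (q k - p) \<le> norm p * (R - norm p)" if "k \<in> A" for k
  proof -
    have "inner p (q k) \<le> norm p * R"
      using norm_cauchy_schwarz[of p "q k"] assms(2)[OF that] by (meson mult_left_mono norm_ge_zero order_trans)
    then show ?thesis
      by (simp add: inner_diff_right algebra_simps power2_eq_square flip: power2_norm_eq_inner)
  qed
  then have "(\<Sum>k\<in>A. a k * inner p (q k - p)) \<le> (\<Sum>k\<in>A. a k * (norm p * (R - norm p)))"
    using assms(1) by (intro sum_mono mult_left_mono) auto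
  then show ?thesis
    by (simp add: inner_sum_right sum_distrib_right)
qed

lemma mass_pos:
  assumes "n > 0"
  shows "mass \<beta> n q p k > 0"
proof -
  have "(\<Sum>i<n. exp (- \<beta> * (norm (q k - p i))\<^sup>2)) > 0"
    using assms by (intro sum_pos) auto
  then show ?thesis
    using assms by (simp add: mass_def)
qed

lemma inner_v_ms_le:
  fixes p :: "nat \<Rightarrow> 'a::euclidean_space"
  assumes "n > 0" "m > 0" "\<sigma>1 \<ge> 0" and "\<And>k. k < m \<Longrightarrow> norm (q k) \<le> R"
  shows "inner (p i) (v_ms \<beta> \<sigma>1 n m q p i) \<le> \<sigma>1 / real m * (norm (p i) * (R - norm (p i)))"
proof -
  define a where "a k = inverse (mass \<beta> n q p k) * exp (- \<beta> * (norm (q k - p i))\<^sup>2)" for k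
  have "a k > 0" for k
    using mass_pos[OF \<open>n > 0\<close>, of \<beta> q p k] by (simp add: a_def)
  then have S: "(\<Sum>k<m. a k) > 0"
    using \<open>m > 0\<close> by (intro sum_pos) auto
  have "inner (p i) (v_ms \<beta> \<sigma>1 n m q p i)
      = \<sigma>1 / real m / (\<Sum>k<m. a k) * inner (p i) (\<Sum>k<m. a k *\<^sub>R (q k - p i))"
    by (simp add: v_ms_def a_def)
  also have "\<dots> \<le> \<sigma>1 / real m / (\<Sum>k<m. a k) * ((\<Sum>k<m. a k) * (norm (p i) * (R - norm (p i))))"
    using inner_sum_scaleR_diff_le[of "{..<m}" a q R "p i"] \<open>\<And>k. a k > 0\<close> assms S
    by (intro mult_left_mono) (auto simp: less_imp_le)
  also have "\<dots> = \<sigma>1 / real m * (norm (p i) * (R - norm (p i)))"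
    using S by simp
  finally show ?thesis .
qed

lemma norm_v_cv_tilde_le:
  fixes p :: "nat \<Rightarrow> 'a::euclidean_space"
  assumes "\<sigma>2 \<ge> 0" "\<epsilon> > 0" "r \<ge> 0"
  shows "norm (v_cv_tilde \<sigma>2 \<epsilon> r n p i) \<le> \<sigma>2 * real n * r"
proof -
  define J where "J = {j. j < n \<and> j \<noteq> i \<and> norm (p i - p j) \<le> r}"
  have J: "J \<subseteq> {..<n}"
    unfolding J_def by auto
  have term_le: "norm (((r - norm (p i - p j)) / (norm (p i - p j) + \<epsilon>)) *\<^sub>R (p i - p j)) \<le> r"
    if "j \<in> J" for j
  proof -
    define d where "d = norm (p i - p j)"
    have d: "0 \<le> d" "d \<le> r"
      using that by (auto simp: J_def d_def)
    have "norm (((r - d) / (d + \<epsilon>)) *\<^sub>R (p i - p j)) = (r - d) * (d / (d + \<epsilon>))"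
      using d \<open>\<epsilon> > 0\<close> by (simp add: d_def)
    also have "\<dots> \<le> r - d"
      using d \<open>\<epsilon> > 0\<close> by (intro mult_left_le) auto
    finally show ?thesis
      using d unfolding d_def by linarith
  qed
  have "norm (v_cv_tilde \<sigma>2 \<epsilon> r n p i)
      = \<sigma>2 * norm (\<Sum>j\<in>J. ((r - norm (p i - p j)) / (norm (p i - p j) + \<epsilon>)) *\<^sub>R (p i - p j))"
    using assms by (simp add: v_cv_tilde_def J_def)
  also have "\<dots> \<le> \<sigma>2 * (\<Sum>j\<in>J. norm (((r - norm (p i - p j)) / (norm (p i - p j) + \<epsilon>)) *\<^sub>R (p i - p j)))"
    using assms(1) by (rule mult_left_mono[OF norm_sum])
  also have "\<dots> \<le> \<sigma>2 * (real (card J) * r)"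
    using term_le assms sum_bounded_above[of J _ r] by (intro mult_left_mono) auto
  also have "\<dots> \<le> \<sigma>2 * real n * r"
    using card_mono[OF _ J] assms by (simp add: mult.assoc mult_left_mono mult_right_mono)
  finally show ?thesis .
qed

lemma kappa2_in_unit_interval:
  assumes "0 \<le> \<epsilon>" "\<epsilon> \<le> 1"
  shows "kappa2 \<epsilon> v vt \<in> {0..1}"
proof -
  define \<phi> where "\<phi> = min ((norm v)\<^sup>2 / \<epsilon>) 1"
  define c where "c = min (- (1 - \<epsilon>) * (norm v)\<^sup>2 / inner v vt) 1"
  have \<phi>: "0 \<le> \<phi>" "\<phi> \<le> 1"
    using assms by (auto simp: \<phi>_def)
  have c: "0 \<le> c" "c \<le> 1" if "inner v vt < 0"
    using assms that by (auto simp: c_def divide_nonpos_neg mult_nonpos_nonneg)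
  have "kappa2 \<epsilon> v vt = (if inner v vt \<ge> 0 then \<phi> else \<phi> * c)"
    unfolding kappa2_def \<phi>_def c_def Let_def by simp
  then show ?thesis
    using \<phi> c by (auto intro: mult_le_one)
qed

lemma sat_eq_pos_scaleR:
  assumes "vmax > 0"
  shows "\<exists>c>0. sat vmax z = c *\<^sub>R z"
proof (cases "norm z > vmax")
  case True
  moreover have "vmax / norm z > 0"
    using True assms by (intro divide_pos_pos) auto
  ultimately show ?thesis
    by (auto simp: sat_def)
next
  case False
  then show ?thesis
    by (intro exI[of _ 1]) (simp add: sat_def)
qed

lemma inner_closed_loop_neg:
  fixes p :: "nat \<Rightarrow> 'a::euclidean_space"
  assumes "n > 0" "m > 0" "\<sigma>1 > 0" "\<sigma>2 \<ge> 0" "0 < \<epsilon>" "\<epsilon> \<le> 1" "r \<ge> 0" "vmax > 0"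
    and R: "\<And>k. k < m \<Longrightarrow> norm (q k) \<le> R"
    and far: "norm (p i) > R + real m * (\<sigma>2 * real n * r) / \<sigma>1"
  shows "inner (p i) (closed_loop \<beta> \<sigma>1 \<sigma>2 \<epsilon> r vmax n m q p i) < 0"
proof -
  define vm where "vm = v_ms \<beta> \<sigma>1 n m q p i"
  define vt where "vt = v_cv_tilde \<sigma>2 \<epsilon> r n p i"
  define \<kappa> where "\<kappa> = kappa2 \<epsilon> vm vt"
  define P where "P = norm (p i)"
  define V where "V = \<sigma>2 * real n * r"
  have "R \<ge> 0"
    using R[of 0] \<open>m > 0\<close> norm_ge_zero order_trans by blast
  moreover have "V \<ge> 0"
    using assms by (simp add: V_def)
  moreover have "real m * V / \<sigma>1 \<ge> 0"
    using \<open>V \<ge> 0\<close> \<open>\<sigma>1 > 0\<close> by simp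
  ultimately have "P > 0"
    using far unfolding P_def V_def by linarith
  have radial: "\<sigma>1 / real m * (R - P) + V < 0"
    using far assms by (simp add: P_def V_def field_simps)
  have "inner (p i) vt \<le> P * norm vt"
    unfolding P_def by (rule norm_cauchy_schwarz)
  also have "\<dots> \<le> P * V"
    using \<open>P > 0\<close> norm_v_cv_tilde_le[of \<sigma>2 \<epsilon> r n p i] assms
    by (intro mult_left_mono) (auto simp: vt_def V_def)
  finally have "inner (p i) vt \<le> P * V" .
  moreover have "\<kappa> \<in> {0..1}"
    unfolding \<kappa>_def using assms by (intro kappa2_in_unit_interval) auto
  ultimately have "\<kappa> * inner (p i) vt \<le> \<kappa> * (P * V)" and "\<kappa> * (P * V) \<le> P * V"
    using \<open>P > 0\<close> \<open>V \<ge> 0\<close> by (auto intro: mult_left_mono mult_left_le_one_le)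
  then have "inner (p i) (\<kappa> *\<^sub>R vt) \<le> P * V"
    by simp
  moreover have "inner (p i) vm \<le> \<sigma>1 / real m * (P * (R - P))"
    using inner_v_ms_le[of n m \<sigma>1 q R p i] assms by (simp add: vm_def P_def)
  ultimately have "inner (p i) (vm + \<kappa> *\<^sub>R vt) \<le> \<sigma>1 / real m * (P * (R - P)) + P * V"
    by (simp add: inner_add_right)
  also have "\<dots> = P * (\<sigma>1 / real m * (R - P) + V)"
    by (simp add: algebra_simps diff_divide_distrib)
  also have "\<dots> < 0"
    using \<open>P > 0\<close> radial by (rule mult_pos_neg)
  finally have "inner (p i) (vm + \<kappa> *\<^sub>R vt) < 0" .
  moreover obtain c where "c > 0" and "sat vmax (vm + \<kappa> *\<^sub>R vt) = c *\<^sub>R (vm + \<kappa> *\<^sub>R vt)"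
    using sat_eq_pos_scaleR \<open>vmax > 0\<close> by blast
  moreover have "closed_loop \<beta> \<sigma>1 \<sigma>2 \<epsilon> r vmax n m q p i = sat vmax (vm + \<kappa> *\<^sub>R vt)"
    by (simp add: closed_loop_def Let_def vm_def vt_def \<kappa>_def)
  ultimately show ?thesis
    by (simp add: mult_pos_neg)
qed

theorem lemma4:
  fixes \<beta> \<sigma>1 \<sigma>2 \<epsilon> r vmax t0 :: real and n m :: nat
    and q :: "nat \<Rightarrow> 'a::euclidean_space"
    and x :: "real \<Rightarrow> nat \<Rightarrow> 'a"
  assumes "n \<ge> 2" and "m \<ge> 1"
    and "\<beta> > 0" and "\<sigma>1 > 0" and "\<sigma>2 > 0" and "0 < \<epsilon>" and "\<epsilon> < 1"
    and "r > 0" and "vmax > 0"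
    and sol: "\<And>t i. t \<ge> t0 \<Longrightarrow> i < n \<Longrightarrow>
       ((\<lambda>s. x s i) has_vector_derivative closed_loop \<beta> \<sigma>1 \<sigma>2 \<epsilon> r vmax n m q (x t) i)
         (at t within {t0..})"
  shows "\<exists>B. \<forall>t\<ge>t0. \<forall>i<n. norm (x t i) \<le> B"
proof -
  define R where "R = (\<Sum>k<m. norm (q k))"
  define Rs where "Rs = R + real m * (\<sigma>2 * real n * r) / \<sigma>1"
  have "norm (x t i) \<le> max (\<Sum>j<n. norm (x t0 j)) Rs" if "t \<ge> t0" "i < n" for t i
  proof -
    have "norm (q k) \<le> R" if "k < m" for k
      unfolding R_def using that by (intro member_le_sum) auto
    then have "norm (x t i) \<le> max (norm (x t0 i)) Rs"
      using sol[OF _ \<open>i < n\<close>] inner_closed_loop_neg[of n m \<sigma>1 \<sigma>2 \<epsilon> r vmax q R "x _" i \<beta>] assms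
      by (intro inward_trajectory_norm_le_max[OF _ _ \<open>t \<ge> t0\<close>]) (auto simp: Rs_def)
    moreover have "norm (x t0 i) \<le> (\<Sum>j<n. norm (x t0 j))"
      using \<open>i < n\<close> by (intro member_le_sum) auto
    ultimately show ?thesis
      by linarith
  qed
  then show ?thesis
    by blast
qed

end
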